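(* Let $\mathcal{H}$ be an infinite-dimensional separable Hilbert space with inner product $\langle\cdot,\cdot\rangle$ (linear in the second argument), let $\mathcal{D}\subseteq\mathcal{H}$ be a dense subspace, and let $\mathcal{F}_\varphi=\{\varphi_n\}_{n\ge0}$, $\mathcal{F}_\psi=\{\psi_n\}_{n\ge0}$ be biorthogonal families, $\langle\varphi_n,\psi_k\rangle=\delta_{n,k}$, both complete in $\mathcal{H}$, with $\varphi_n,\psi_n\in\mathcal{D}$ for all $n$. Let $H$ be an operator with $D(H)\supseteq\mathcal{D}$ and $D(H^\dagger)\supseteq\mathcal{D}$. (i) $H$ is $(\varphi,\psi)$-tridiagonal if and only if $H^\dagger$ is $(\psi,\varphi)$-tridiagonal. (ii) Suppose moreover that $\mathcal{F}_\varphi,\mathcal{F}_\psi$ are biorthogonal Riesz bases, i.e. there exist an orthonormal basis $\{e_n\}_{n\ge0}$ of $\mathcal{H}$ with $e_n\in\mathcal{D}$ for all $n$ and a bounded operator $R$ with bounded inverse such that $\varphi_n=Re_n$, $\psi_n=(R^{-1})^\dagger e_n$, where $\mathcal{D}$ is stable under $R$, $R^\dagger$, $R^{-1}$, $(R^{-1})^\dagger$; and suppose $H$ leaves $\mathcal{D}$ stable. Then $H$ is $(\varphi,\psi)$-tridiagonal if and only if $H_0:=R^{-1}HR$ is $(e,e)$-tridiagonal.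
   Context: Definition: for families $\{f_n\}_{n\ge0}$, $\{g_n\}_{n\ge0}$ and an operator $K$ whose domain contains all $f_m$, $K$ is called $(f,g)$-tridiagonal if there exist three sequences of complex numbers $\{b_n\},\{a_n\},\{b_n'\}$ such that $\langle g_n,Kf_m\rangle=b_n\delta_{n,m+1}+a_n\delta_{n,m}+b_n'\delta_{n,m-1}$ for all $n,m\ge0$. $K$ is called $(e,e)$-tridiagonal (or $e$-tridiagonal) when $f_n=g_n=e_n$. No self-adjointness and no relation between $\{b_n\}$ and $\{b_n'\}$ is assumed. *)

theory Defs
  imports "HOL-Analysis.Analysis"
begin

class complex_vector = real_vector +
  fixes scaleC :: "complex \<Rightarrow> 'a \<Rightarrow> 'a" (infixr "*\<^sub>C" 75)
  assumes scaleC_add_right: "a *\<^sub>C (x + y) = a *\<^sub>C x + a *\<^sub>C y"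
    and scaleC_add_left: "(a + b) *\<^sub>C x = a *\<^sub>C x + b *\<^sub>C x"
    and scaleC_scaleC: "a *\<^sub>C (b *\<^sub>C x) = (a * b) *\<^sub>C x"
    and scaleC_one: "1 *\<^sub>C x = x"
    and scaleR_scaleC: "scaleR r = scaleC (complex_of_real r)"

class complex_inner = complex_vector + real_normed_vector +
  fixes cinner :: "'a \<Rightarrow> 'a \<Rightarrow> complex"
  assumes cinner_conj: "cinner x y = cnj (cinner y x)"
    and cinner_add_right: "cinner x (y + z) = cinner x y + cinner x z"
    and cinner_scaleC_right: "cinner x (c *\<^sub>C y) = c * cinner x y"
    and cinner_ge_zero: "0 \<le> Re (cinner x x)"
    and cinner_eq_zero_iff: "cinner x x = 0 \<longleftrightarrow> x = 0"
    and norm_eq_sqrt_cinner: "norm x = sqrt (Re (cinner x x))"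

class chilbert_space = complex_inner + complete_space

definition cspan :: "'a::complex_vector set \<Rightarrow> 'a set" where
  "cspan S = module.span (scaleC :: complex \<Rightarrow> 'a \<Rightarrow> 'a) S"

definition csubspace :: "'a::complex_vector set \<Rightarrow> bool" where
  "csubspace S = module.subspace (scaleC :: complex \<Rightarrow> 'a \<Rightarrow> 'a) S"

definition separable_space :: "'a::metric_space itself \<Rightarrow> bool" where
  "separable_space _ \<longleftrightarrow> (\<exists>S::'a set. countable S \<and> closure S = UNIV)"

definition infinite_dimensional :: "'a::complex_vector itself \<Rightarrow> bool" where
  "infinite_dimensional _ \<longleftrightarrow> \<not> (\<exists>S::'a set. finite S \<and> cspan S = UNIV)"

definition dense_subspace :: "'a::complex_inner set \<Rightarrow> bool" where
  "dense_subspace D \<longleftrightarrow> csubspace D \<and> closure D = UNIV"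

definition complete_family :: "(nat \<Rightarrow> 'a::complex_inner) \<Rightarrow> bool" where
  "complete_family f \<longleftrightarrow> closure (cspan (range f)) = UNIV"

definition biorthogonal :: "(nat \<Rightarrow> 'a::complex_inner) \<Rightarrow> (nat \<Rightarrow> 'a) \<Rightarrow> bool" where
  "biorthogonal f g \<longleftrightarrow> (\<forall>n k. cinner (f n) (g k) = (if n = k then 1 else 0))"

definition orthonormal_basis :: "(nat \<Rightarrow> 'a::complex_inner) \<Rightarrow> bool" where
  "orthonormal_basis e \<longleftrightarrow> (\<forall>n k. cinner (e n) (e k) = (if n = k then 1 else 0))
                            \<and> complete_family e"

text \<open>A (possibly unbounded) linear operator \<open>A\<close> with domain \<open>DA\<close> (a linear subspace);
  values of \<open>A\<close> outside \<open>DA\<close> are irrelevant.\<close>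
definition linear_operator :: "('a::complex_vector \<Rightarrow> 'a) \<Rightarrow> 'a set \<Rightarrow> bool" where
  "linear_operator A DA \<longleftrightarrow> csubspace DA \<and>
     (\<forall>x\<in>DA. \<forall>y\<in>DA. A (x + y) = A x + A y) \<and>
     (\<forall>c. \<forall>x\<in>DA. A (c *\<^sub>C x) = c *\<^sub>C A x)"

definition is_adjoint :: "('a::complex_inner \<Rightarrow> 'a) \<Rightarrow> 'a set \<Rightarrow> ('a \<Rightarrow> 'a) \<Rightarrow> 'a set \<Rightarrow> bool" where
  "is_adjoint A DA Ad DAd \<longleftrightarrow>
     DAd = {y. \<exists>z. \<forall>x\<in>DA. cinner y (A x) = cinner z x} \<and>
     (\<forall>y\<in>DAd. \<forall>x\<in>DA. cinner (Ad y) x = cinner y (A x))"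

definition bounded_cop :: "('a::complex_inner \<Rightarrow> 'a) \<Rightarrow> bool" where
  "bounded_cop A \<longleftrightarrow> linear_operator A UNIV \<and> (\<exists>K. \<forall>x. norm (A x) \<le> K * norm x)"

definition is_bounded_adjoint :: "('a::complex_inner \<Rightarrow> 'a) \<Rightarrow> ('a \<Rightarrow> 'a) \<Rightarrow> bool" where
  "is_bounded_adjoint A Ad \<longleftrightarrow> (\<forall>x y. cinner (Ad x) y = cinner x (A y))"

definition tridiagonal ::
  "(nat \<Rightarrow> 'a::complex_inner) \<Rightarrow> (nat \<Rightarrow> 'a) \<Rightarrow> ('a \<Rightarrow> 'a) \<Rightarrow> 'a set \<Rightarrow> bool" where
  "tridiagonal f g K DK \<longleftrightarrow> (\<forall>m. f m \<in> DK) \<and>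
     (\<exists>b a b' :: nat \<Rightarrow> complex. \<forall>n m.
        cinner (g n) (K (f m)) =
          (if n = m + 1 then b n else 0) + (if n = m then a n else 0) + (if m = n + 1 then b' n else 0))"

end

theory Submission
  imports Defs
begin

text \<open>Both parts only concern the matrix elements \<open>\<langle>g n, K (f m)\<rangle>\<close>. For (i), adjointness gives
  \<open>\<langle>\<phi> n, H\<^sup>\<dagger> (\<psi> m)\<rangle> = cnj \<langle>\<psi> m, H (\<phi> n)\<rangle>\<close>: the matrix of \<open>H\<^sup>\<dagger>\<close> is the conjugate transpose
  of the matrix of \<open>H\<close>, and conjugate transposition preserves tridiagonality (the sub- and
  superdiagonal exchange roles). For (ii), \<open>\<langle>e n, R\<^sup>-\<^sup>1 H R (e m)\<rangle> = \<langle>(R\<^sup>-\<^sup>1)\<^sup>\<dagger> (e n), H R (e m)\<rangle>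
  = \<langle>\<psi> n, H (\<phi> m)\<rangle>\<close>, so the two matrices coincide.\<close>

definition tridiagonal_matrix :: "(nat \<Rightarrow> nat \<Rightarrow> complex) \<Rightarrow> bool" where
  "tridiagonal_matrix M \<longleftrightarrow>
     (\<exists>b a b'. \<forall>n m. M n m =
        (if n = m + 1 then b n else 0) + (if n = m then a n else 0) + (if m = n + 1 then b' n else 0))"

lemma tridiagonal_iff_matrix:
  "tridiagonal f g K DK \<longleftrightarrow>
     (\<forall>m. f m \<in> DK) \<and> tridiagonal_matrix (\<lambda>n m. cinner (g n) (K (f m)))"
  unfolding tridiagonal_def tridiagonal_matrix_def by simp

lemma tridiagonal_matrix_conj_transpose:
  assumes "tridiagonal_matrix M"
  shows "tridiagonal_matrix (\<lambda>n m. cnj (M m n))"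
proof -
  obtain b a b' where M: "\<And>n m. M n m =
      (if n = m + 1 then b n else 0) + (if n = m then a n else 0) + (if m = n + 1 then b' n else 0)"
    using assms unfolding tridiagonal_matrix_def by blast
  have "cnj (M m n) =
      (if n = m + 1 then cnj (b' (n - 1)) else 0) + (if n = m then cnj (a n) else 0)
      + (if m = n + 1 then cnj (b (n + 1)) else 0)" for n m
    using M[of m n] by auto
  then show ?thesis
    unfolding tridiagonal_matrix_def by (intro exI allI)
qed

lemma tridiagonal_matrix_conj_transpose_iff:
  "tridiagonal_matrix (\<lambda>n m. cnj (M m n)) \<longleftrightarrow> tridiagonal_matrix M"
  using tridiagonal_matrix_conj_transpose[of "\<lambda>n m. cnj (M m n)"]
    tridiagonal_matrix_conj_transpose[of M]
  by auto

lemma adjoint_matrix_element: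
  assumes "is_adjoint H DH Hd DHd" and "x \<in> DH" and "y \<in> DHd"
  shows "cinner x (Hd y) = cnj (cinner y (H x))"
proof -
  have "cinner (Hd y) x = cinner y (H x)"
    using assms unfolding is_adjoint_def by blast
  then show ?thesis
    by (metis cinner_conj)
qed

lemma tridiagonal_adjoint_iff:
  assumes "is_adjoint H DH Hd DHd"
    and "\<And>n. f n \<in> DH" and "\<And>n. g n \<in> DHd"
  shows "tridiagonal f g H DH \<longleftrightarrow> tridiagonal g f Hd DHd"
proof -
  have "(\<lambda>n m. cinner (f n) (Hd (g m))) = (\<lambda>n m. cnj (cinner (g m) (H (f n))))"
    using adjoint_matrix_element[OF assms(1) assms(2) assms(3)] by simp
  then show ?thesis
    using assms(2,3) by (simp add: tridiagonal_iff_matrix tridiagonal_matrix_conj_transpose_iff)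
qed

lemma tridiagonal_similarity_iff:
  assumes "is_bounded_adjoint Rinv Rinvadj"
    and "\<And>n. phi n = R (e n)" and "\<And>n. psi n = Rinvadj (e n)"
  shows "tridiagonal phi psi H DH \<longleftrightarrow> tridiagonal e e (\<lambda>x. Rinv (H (R x))) {x. R x \<in> DH}"
proof -
  have "cinner (e n) (Rinv (H (R (e m)))) = cinner (psi n) (H (phi m))" for n m
    using assms unfolding is_bounded_adjoint_def by simp
  then show ?thesis
    using assms(2) by (simp add: tridiagonal_iff_matrix)
qed

theorem lemma2:
  fixes D :: "'a::chilbert_space set"
    and phi psi :: "nat \<Rightarrow> 'a"
    and H Hd :: "'a \<Rightarrow> 'a" and DH DHd :: "'a set"
  assumes "separable_space TYPE('a)" and "infinite_dimensional TYPE('a)"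
    and "dense_subspace D"
    and "biorthogonal phi psi"
    and "complete_family phi" and "complete_family psi"
    and "\<And>n. phi n \<in> D" and "\<And>n. psi n \<in> D"
    and "linear_operator H DH"
    and "is_adjoint H DH Hd DHd"
    and "D \<subseteq> DH" and "D \<subseteq> DHd"
  shows "(tridiagonal phi psi H DH \<longleftrightarrow> tridiagonal psi phi Hd DHd)
       \<and> (\<forall>(e :: nat \<Rightarrow> 'a) (R :: 'a \<Rightarrow> 'a) Rinv Radj Rinvadj.
            orthonormal_basis e \<and> (\<forall>n. e n \<in> D)
            \<and> bounded_cop R \<and> bounded_cop Rinv
            \<and> (\<forall>x. Rinv (R x) = x) \<and> (\<forall>x. R (Rinv x) = x)
            \<and> is_bounded_adjoint R Radj \<and> is_bounded_adjoint Rinv Rinvadj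
            \<and> (\<forall>n. phi n = R (e n)) \<and> (\<forall>n. psi n = Rinvadj (e n))
            \<and> R ` D \<subseteq> D \<and> Radj ` D \<subseteq> D \<and> Rinv ` D \<subseteq> D \<and> Rinvadj ` D \<subseteq> D
            \<and> H ` D \<subseteq> D
            \<longrightarrow> (tridiagonal phi psi H DH \<longleftrightarrow>
                 tridiagonal e e (\<lambda>x. Rinv (H (R x))) {x. R x \<in> DH}))"
proof (intro conjI allI impI)
  have "phi n \<in> DH" and "psi n \<in> DHd" for n
    using assms(7,8,11,12) by auto
  then show "tridiagonal phi psi H DH \<longleftrightarrow> tridiagonal psi phi Hd DHd"
    using tridiagonal_adjoint_iff[OF assms(10)] by blast
next
  fix e :: "nat \<Rightarrow> 'a" and R Rinv Radj Rinvadj :: "'a \<Rightarrow> 'a"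
  assume "orthonormal_basis e \<and> (\<forall>n. e n \<in> D)
            \<and> bounded_cop R \<and> bounded_cop Rinv
            \<and> (\<forall>x. Rinv (R x) = x) \<and> (\<forall>x. R (Rinv x) = x)
            \<and> is_bounded_adjoint R Radj \<and> is_bounded_adjoint Rinv Rinvadj
            \<and> (\<forall>n. phi n = R (e n)) \<and> (\<forall>n. psi n = Rinvadj (e n))
            \<and> R ` D \<subseteq> D \<and> Radj ` D \<subseteq> D \<and> Rinv ` D \<subseteq> D \<and> Rinvadj ` D \<subseteq> D
            \<and> H ` D \<subseteq> D"
  then have "is_bounded_adjoint Rinv Rinvadj" and "\<And>n. phi n = R (e n)" and "\<And>n. psi n = Rinvadj (e n)"
    by simp_all
  then show "tridiagonal phi psi H DH \<longleftrightarrow> tridiagonal e e (\<lambda>x. Rinv (H (R x))) {x. R x \<in> DH}"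
    by (rule tridiagonal_similarity_iff)
qed

end
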